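(* Let $q=p^n$ with $p>2$ prime, let $g\ge 2$ be an integer with $\gcd(g,p)=1$, and let $c\in\mathbb{F}_q$ be such that $C': y^2=x^{2g+1}+c\,x^{g+1}+x$ is a (nonsingular) hyperelliptic curve of genus $g$ over $\mathbb{F}_q$. Let $s$ be the involution $s:(x,y)\mapsto\left(\frac1x,\frac{y}{x^{g+1}}\right)$ of $C'$ and $\omega:(x,y)\mapsto(x,-y)$ the hyperelliptic involution. Then: 1. The quotient curve $C'/\langle s\rangle$ is given (i.e. is birationally equivalent over $\mathbb{F}_q$ to the curve given) by $X_1': y^2=D_g(x)+c$ if $g$ is odd, and by $X_1': y^2=(x+2)(D_g(x)+c)$ if $g$ is even. 2. The quotient curve $C'/\langle s\omega\rangle$, where $s\omega:(x,y)\mapsto\left(\frac1x,-\frac{y}{x^{g+1}}\right)$, is given by $X_2': y^2=(x^2-4)(D_g(x)+c)$ if $g$ is odd, and by $X_2': y^2=(x-2)(D_g(x)+c)$ if $g$ is even.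
   Context: For $m\ge1$ and $\alpha$ in a field, the Dickson polynomial $D_m(x,\alpha)=\sum_{i=0}^{\lfloor m/2\rfloor}\frac{m}{m-i}\binom{m-i}{i}(-\alpha)^i x^{m-2i}$ is the unique polynomial satisfying $D_m\!\left(u+\frac{\alpha}{u},\alpha\right)=u^m+\left(\frac{\alpha}{u}\right)^m$; we write $D_m(x):=D_m(x,1)$. *)

theory Defs
  imports "HOL-Computational_Algebra.Polynomial_Factorial"
          "HOL-Algebra.Generated_Fields"
begin

text \<open>The rational coefficient m/(m-i) binom(m-i,i) is an integer; we compute it in the
  integers (exact division) and map it into the field.\<close>

definition dickson_coeff :: "nat \<Rightarrow> nat \<Rightarrow> nat" where
  "dickson_coeff m i = (m * ((m - i) choose i)) div (m - i)"

definition dickson :: "nat \<Rightarrow> 'a::comm_ring_1 \<Rightarrow> 'a poly" where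
  "dickson m \<alpha> = (\<Sum>i = 0..m div 2. Polynomial.monom (of_nat (dickson_coeff m i) * (-\<alpha>) ^ i) (m - 2 * i))"

abbreviation dickson1 :: "nat \<Rightarrow> 'a::comm_ring_1 poly" where
  "dickson1 m \<equiv> dickson m 1"

type_synonym 'a rf = "'a poly fract"

definition rf_const :: "'a::field \<Rightarrow> 'a rf" where
  "rf_const a = Fract [:a:] 1"

definition rf_X :: "'a::field rf" where
  "rf_X = Fract [:0, 1:] 1"

definition rf_of_poly :: "'a::field poly \<Rightarrow> 'a rf" where
  "rf_of_poly p = Fract p 1"

definition rf_eval :: "'a::field poly \<Rightarrow> 'a rf \<Rightarrow> 'a rf" where
  "rf_eval p z = poly (map_poly rf_const p) z"

definition rf_inv_subst :: "'a::field rf \<Rightarrow> 'a rf" where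
  "rf_inv_subst r = (SOME s. \<exists>p q. q \<noteq> 0 \<and> r = Fract p q \<and>
      s = rf_eval p (inverse rf_X) / rf_eval q (inverse rf_X))"

text \<open>The function field F(C) of the curve C: y^2 = f(x) (f not a square), modelled as
  F(x)[y]/(y^2 - f): the pair (a, b) stands for a + b*y.\<close>
definition FF :: "'a::field poly \<Rightarrow> ('a rf \<times> 'a rf) ring" where
  "FF f = \<lparr> carrier = UNIV,
            mult = (\<lambda>(a, b) (c, d). (a * c + b * d * rf_of_poly f, a * d + b * c)),
            one = (1, 0),
            zero = (0, 0),
            add = (\<lambda>(a, b) (c, d). (a + c, b + d)) \<rparr>"

definition FF_const :: "'a::field \<Rightarrow> 'a rf \<times> 'a rf" where
  "FF_const a = (rf_const a, 0)"

definition FF_eval :: "'a::field poly \<Rightarrow> 'a poly \<Rightarrow> 'a rf \<times> 'a rf \<Rightarrow> 'a rf \<times> 'a rf" where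
  "FF_eval f p z = foldr (\<lambda>a acc. FF_const a \<oplus>\<^bsub>FF f\<^esub> (z \<otimes>\<^bsub>FF f\<^esub> acc)) (coeffs p) \<zero>\<^bsub>FF f\<^esub>"

definition FF_transcendental :: "'a::field poly \<Rightarrow> 'a rf \<times> 'a rf \<Rightarrow> bool" where
  "FF_transcendental f z \<longleftrightarrow> (\<forall>p::'a poly. p \<noteq> 0 \<longrightarrow> FF_eval f p z \<noteq> \<zero>\<^bsub>FF f\<^esub>)"

definition FF_gen :: "'a::field poly \<Rightarrow> ('a rf \<times> 'a rf) set \<Rightarrow> ('a rf \<times> 'a rf) set" where
  "FF_gen f S = generate_field (FF f) (range FF_const \<union> S)"

text \<open>Action on F(C) (by pullback) of the involutions of C: y^2 = f(x), with
  s : (x,y) |-> (1/x, y/x^(g+1)) and s omega : (x,y) |-> (1/x, -y/x^(g+1)).\<close>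
definition act_s :: "nat \<Rightarrow> 'a::field rf \<times> 'a rf \<Rightarrow> 'a rf \<times> 'a rf" where
  "act_s g = (\<lambda>(a, b). (rf_inv_subst a, rf_inv_subst b / rf_X ^ (g + 1)))"

definition act_s_omega :: "nat \<Rightarrow> 'a::field rf \<times> 'a rf \<Rightarrow> 'a rf \<times> 'a rf" where
  "act_s_omega g = (\<lambda>(a, b). (rf_inv_subst a, - (rf_inv_subst b / rf_X ^ (g + 1))))"

definition fixed_field :: "('b \<Rightarrow> 'b) \<Rightarrow> 'b set" where
  "fixed_field \<tau> = {z. \<tau> z = z}"

text \<open>The quotient curve C/<tau> (whose function field is the fixed field F(C)^tau) is
  birationally equivalent over F to the curve y^2 = h(x): there is an F-isomorphism from
  F(x)[y]/(y^2 - h) onto F(C)^tau, i.e. elements u, v of the fixed field with u transcendental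
  over F, v not in F(u), v^2 = h(u), and F(u, v) = F(C)^tau.\<close>
definition quotient_given_by :: "'a::field poly \<Rightarrow> ('a rf \<times> 'a rf \<Rightarrow> 'a rf \<times> 'a rf) \<Rightarrow> 'a poly \<Rightarrow> bool" where
  "quotient_given_by f \<tau> h \<longleftrightarrow>
     (\<exists>u v. u \<in> fixed_field \<tau> \<and> v \<in> fixed_field \<tau> \<and>
            FF_transcendental f u \<and>
            v \<notin> FF_gen f {u} \<and>
            v \<otimes>\<^bsub>FF f\<^esub> v = FF_eval f h u \<and>
            FF_gen f {u, v} = fixed_field \<tau>)"

definition Cpoly :: "nat \<Rightarrow> 'a::field \<Rightarrow> 'a poly" where
  "Cpoly g c = Polynomial.monom 1 (2 * g + 1) + Polynomial.monom c (g + 1) + Polynomial.monom 1 1"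

end

theory Submission
  imports Defs
begin

text \<open>
  Both involutions act on the function field F(x)[y]/(y^2 - f) of C' by a + b y \<mapsto>
  \<sigma>(a) + k \<sigma>(b) y, where \<sigma> is the substitution x \<mapsto> 1/x and k = \<plusminus>x^-(g+1).
  The fixed field of \<sigma> on F(x) is F(u), u = x + 1/x: writing a \<sigma>-invariant p/q as
  (p \<sigma>(q))/(q \<sigma>(q)) makes numerator and denominator \<sigma>-invariant, after multiplication by
  x^M both are self-reciprocal polynomials of degree at most 2M, and such a polynomial is x^M
  times a polynomial in u.  Hence, for any w \<noteq> 0 with k \<sigma>(w) = w, the fixed field of the
  involution is F(u, v) with v = w y, and v^2 = w^2 f.  Choosing w = x^-(g+1)/2 resp.
  (x - 1/x) x^-(g+1)/2 for odd g and w = (x \<plusminus> 1) x^-(g/2+1) for even g, and using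
  D_g(x + 1/x) = x^g + x^-g, turns w^2 f into the stated polynomials in u.
\<close>

section \<open>Dickson polynomials\<close>

lemma dickson_coeff_eq_0: "m < 2 * i \<Longrightarrow> dickson_coeff m i = 0"
  by (simp add: dickson_coeff_def binomial_eq_0)

lemma dickson_coeff_0: "m \<ge> 1 \<Longrightarrow> dickson_coeff m 0 = 1"
  by (simp add: dickson_coeff_def)

lemma dickson_coeff_eq_binomials:
  "dickson_coeff m i =
     (if i < m then (m - i choose i) + (if i = 0 then 0 else m - i - 1 choose (i - 1)) else 0)"
proof (cases "i < m")
  case True
  have "m * (m - i choose i) = (m - i) * ((m - i choose i) + (if i = 0 then 0 else m - i - 1 choose (i - 1)))"
  proof (cases i)
    case (Suc k)
    obtain n where n: "m - i = Suc n" using True by (metis Suc_diff_Suc zero_less_diff)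
    have "Suc k * (Suc n choose Suc k) = Suc n * (n choose k)" by (rule Suc_times_binomial)
    moreover have "m = Suc n + Suc k" using n Suc True by simp
    ultimately show ?thesis using n Suc by (simp add: algebra_simps)
  qed simp
  then show ?thesis using True by (simp add: dickson_coeff_def)
qed (simp add: dickson_coeff_def)

lemma dickson_coeff_Suc_Suc:
  assumes "m \<ge> 1"
  shows "dickson_coeff (m + 2) (j + 1) = dickson_coeff (m + 1) (j + 1) + dickson_coeff m j"
proof -
  consider "m < j" | "j = m" | "j < m" by linarith
  then show ?thesis
  proof cases
    case 3
    then obtain n where n: "m - j = Suc n" by (metis Suc_diff_Suc zero_less_diff)
    have "m + 2 - (j + 1) = Suc (m - j)" using 3 by simp
    then have "(m + 2 - (j + 1) choose (j + 1)) = (m - j choose (j + 1)) + (m - j choose j)"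
      by simp
    moreover have "(m - j choose j) = (m - j - 1 choose j) + (if j = 0 then 0 else m - j - 1 choose (j - 1))"
      using n by (cases j) simp_all
    ultimately show ?thesis using 3 by (simp add: dickson_coeff_eq_binomials)
  qed (use assms in \<open>simp_all add: dickson_coeff_eq_binomials\<close>)
qed

definition dickson_term :: "nat \<Rightarrow> 'a::comm_ring_1 \<Rightarrow> nat \<Rightarrow> 'a" where
  "dickson_term m t i = of_nat (dickson_coeff m i) * (-1) ^ i * t ^ (m - 2 * i)"

lemma poly_dickson1_eq_sum:
  assumes "m \<le> N"
  shows "poly (dickson1 m) t = (\<Sum>i\<le>N. dickson_term m t i)"
proof -
  have "poly (dickson1 m) t = (\<Sum>i = 0..m div 2. dickson_term m t i)"
    by (simp add: dickson_def dickson_term_def poly_sum poly_monom)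
  also have "\<dots> = (\<Sum>i\<le>N. dickson_term m t i)"
    by (rule sum.mono_neutral_left) (use assms in \<open>auto simp: dickson_term_def dickson_coeff_eq_0\<close>)
  finally show ?thesis .
qed

lemma dickson_term_Suc_Suc:
  assumes "m \<ge> 1"
  shows "dickson_term (m + 2) t (j + 1) = t * dickson_term (m + 1) t (j + 1) - dickson_term m t j"
proof (cases "2 * j + 1 \<le> m")
  case True
  then have "m - 2 * j = Suc (m + 1 - 2 * (j + 1))" by simp
  then have "t ^ (m - 2 * j) = t * t ^ (m + 1 - 2 * (j + 1))" by (simp only: power_Suc)
  then show ?thesis using dickson_coeff_Suc_Suc[OF assms, of j]
    by (simp add: dickson_term_def algebra_simps)
next
  case False
  then have "dickson_coeff (m + 1) (j + 1) = 0" by (intro dickson_coeff_eq_0) simp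
  then show ?thesis using dickson_coeff_Suc_Suc[OF assms, of j] by (simp add: dickson_term_def)
qed

lemma poly_dickson1_Suc_Suc:
  fixes t :: "'a::comm_ring_1"
  assumes "m \<ge> 1"
  shows "poly (dickson1 (m + 2)) t = t * poly (dickson1 (m + 1)) t - poly (dickson1 m) t"
proof -
  let ?T = "dickson_term"
  have head: "?T (m + 2) t 0 = t * ?T (m + 1) t 0"
    using assms by (simp add: dickson_term_def dickson_coeff_0)
  have "poly (dickson1 (m + 2)) t = ?T (m + 2) t 0 + (\<Sum>j\<le>m + 1. ?T (m + 2) t (j + 1))"
    using poly_dickson1_eq_sum[of "m + 2" "Suc (m + 1)" t] by (simp only: sum.atMost_Suc_shift) simp
  also have "\<dots> = t * (?T (m + 1) t 0 + (\<Sum>j\<le>m + 1. ?T (m + 1) t (j + 1))) - (\<Sum>j\<le>m + 1. ?T m t j)"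
    by (simp only: head dickson_term_Suc_Suc[OF assms] sum_subtractf sum_distrib_left distrib_left
        add_diff_eq)
  also have "?T (m + 1) t 0 + (\<Sum>j\<le>m + 1. ?T (m + 1) t (j + 1)) = poly (dickson1 (m + 1)) t"
    using poly_dickson1_eq_sum[of "m + 1" "Suc (m + 1)" t] by (simp only: sum.atMost_Suc_shift) simp
  also have "(\<Sum>j\<le>m + 1. ?T m t j) = poly (dickson1 m) t"
    using poly_dickson1_eq_sum[of m "m + 1" t] by simp
  finally show ?thesis .
qed

lemma poly_dickson1_add_inverse:
  fixes x :: "'a::field"
  assumes "x \<noteq> 0" "m \<ge> 1"
  shows "poly (dickson1 m) (x + inverse x) = x ^ m + inverse x ^ m"
  using assms(2)
proof (induction m rule: less_induct)
  case (less m)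
  have inv: "x * inverse x = 1" using assms(1) by simp
  consider "m = 1" | "m = 2" | k where "m = k + 2" "k \<ge> 1"
  proof (cases "m \<ge> 3")
    case True
    then show thesis using that(3)[of "m - 2"] by simp
  next
    case False
    then have "m = 1 \<or> m = 2" using less.prems by linarith
    then show thesis using that(1,2) by blast
  qed
  then show ?case
  proof cases
    case 1
    have "poly (dickson1 1) t = t" for t :: 'a
      using poly_dickson1_eq_sum[of 1 1 t] by (simp add: dickson_term_def dickson_coeff_def)
    then show ?thesis using 1 by simp
  next
    case 2
    have "poly (dickson1 2) (x + inverse x) = (x + inverse x) ^ 2 - 2"
      using poly_dickson1_eq_sum[of 2 2 "x + inverse x"]
      by (simp add: dickson_term_def dickson_coeff_def numeral_2_eq_2 atMost_Suc)
    also have "\<dots> = x ^ 2 + inverse x ^ 2 + 2 * (x * inverse x - 1)"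
      by (simp add: power2_eq_square algebra_simps)
    finally show ?thesis using 2 inv by simp
  next
    case 3
    let ?u = "x + inverse x"
    have "poly (dickson1 m) ?u = ?u * poly (dickson1 (k + 1)) ?u - poly (dickson1 k) ?u"
      using 3 poly_dickson1_Suc_Suc[of k ?u] by simp
    also have "\<dots> = ?u * (x ^ (k + 1) + inverse x ^ (k + 1)) - (x ^ k + inverse x ^ k)"
      using 3 less.IH[of k] less.IH[of "k + 1"] by simp
    also have "\<dots> = x ^ m + inverse x ^ m + (x * inverse x - 1) * (x ^ k + inverse x ^ k)"
      using 3 by (simp add: algebra_simps numeral_2_eq_2)
    finally show ?thesis using inv by simp
  qed
qed

section \<open>The substitution x \<mapsto> 1/x on F(x)\<close>

lemma rf_of_poly_eq_to_fract: "rf_of_poly = to_fract"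
  by (simp add: fun_eq_iff rf_of_poly_def to_fract_def)

lemma rf_of_poly_simps [simp]:
  "rf_of_poly 0 = 0"
  "rf_of_poly 1 = 1"
  "rf_of_poly (p + q) = rf_of_poly p + rf_of_poly q"
  "rf_of_poly (p * q) = rf_of_poly p * rf_of_poly q"
  "rf_of_poly (- p) = - rf_of_poly p"
  "rf_of_poly (p - q) = rf_of_poly p - rf_of_poly q"
  "rf_of_poly p = rf_of_poly q \<longleftrightarrow> p = q"
  "rf_of_poly p = 0 \<longleftrightarrow> p = 0"
  by (simp_all add: rf_of_poly_eq_to_fract)

lemma rf_of_poly_power [simp]: "rf_of_poly (p ^ n) = rf_of_poly p ^ n"
  by (induct n) simp_all

lemma rf_of_poly_const [simp]: "rf_of_poly [:a:] = rf_const a"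
  by (simp add: rf_of_poly_def rf_const_def)

lemma rf_of_poly_X: "rf_of_poly [:0, 1:] = rf_X"
  by (simp add: rf_of_poly_def rf_X_def)

lemma rf_of_poly_pCons: "rf_of_poly (pCons a p) = rf_const a + rf_X * rf_of_poly p"
proof -
  have "pCons a p = [:a:] + [:0, 1:] * p" by simp
  then show ?thesis by (metis rf_of_poly_simps(3,4) rf_of_poly_const rf_of_poly_X)
qed

lemma Fract_eq_rf_of_poly_divide: "Fract p q = rf_of_poly p / rf_of_poly q"
  by (simp add: rf_of_poly_eq_to_fract Fract_conv_to_fract)

lemma rf_const_simps [simp]:
  "rf_const 0 = 0"
  "rf_const 1 = 1"
  "rf_const (a + b) = rf_const a + rf_const b"
  "rf_const (a * b) = rf_const a * rf_const b"
  "rf_const (- a) = - rf_const a"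
  "rf_const (a - b) = rf_const a - rf_const b"
  by (simp_all add: rf_const_def fract_collapse mult.commute flip: one_pCons)

lemma rf_const_of_nat [simp]: "rf_const (of_nat k) = of_nat k"
  by (induct k) simp_all

lemma rf_const_numeral [simp]: "rf_const (numeral k) = numeral k"
  using rf_const_of_nat[of "numeral k"] by simp

lemma rf_const_power [simp]: "rf_const (a ^ n) = rf_const a ^ n"
  by (induct n) simp_all

lemma rf_X_nonzero [simp]: "rf_X \<noteq> 0"
  by (metis rf_of_poly_X rf_of_poly_simps(8) pCons_eq_0_iff one_neq_zero)

lemma rf_X_add_const_nonzero: "rf_X + rf_const a \<noteq> 0"
proof
  assume "rf_X + rf_const a = 0"
  then have "rf_of_poly [:a, 1:] = rf_of_poly 0" by (simp add: rf_of_poly_pCons add.commute)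
  then show False by (simp only: rf_of_poly_simps(7)) simp
qed

lemma rf_X_diff_inverse_nonzero: "rf_X - inverse rf_X \<noteq> (0 :: 'a::field rf)"
proof
  assume "rf_X - inverse rf_X = (0 :: 'a rf)"
  then have "rf_of_poly ([:0, 1:] * [:0, 1:]) = rf_of_poly (1 :: 'a poly)"
    by (simp only: rf_of_poly_simps rf_of_poly_X) (simp add: field_simps)
  then show False by (simp only: rf_of_poly_simps(7)) (simp add: one_pCons)
qed

lemma rf_eval_pCons [simp]: "rf_eval (pCons a p) z = rf_const a + z * rf_eval p z"
  by (simp add: rf_eval_def map_poly_pCons)

lemma rf_eval_0 [simp]: "rf_eval 0 z = 0"
  by (simp add: rf_eval_def)

lemma rf_eval_add [simp]: "rf_eval (p + q) z = rf_eval p z + rf_eval q z"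
  by (induct p arbitrary: q; case_tac q; simp add: algebra_simps)

lemma rf_eval_smult [simp]: "rf_eval (Polynomial.smult a p) z = rf_const a * rf_eval p z"
  by (induct p) (simp_all add: algebra_simps)

lemma rf_eval_1 [simp]: "rf_eval 1 z = 1"
  by (subst one_pCons) (simp only: rf_eval_pCons rf_eval_0 rf_const_simps mult_zero_right add_0_right)

lemma rf_eval_mult [simp]: "rf_eval (p * q) z = rf_eval p z * rf_eval q z"
  by (induct p) (simp_all add: algebra_simps)

lemma rf_eval_monom [simp]: "rf_eval (Polynomial.monom a n) z = rf_const a * z ^ n"
  by (induct n) (simp_all add: monom_Suc monom_0)

lemma rf_eval_sum: "rf_eval (\<Sum>i\<in>A. f i) z = (\<Sum>i\<in>A. rf_eval (f i) z)"
  by (induct A rule: infinite_finite_induct) simp_all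

lemma rf_eval_rf_X: "rf_eval p rf_X = rf_of_poly p"
  by (induct p) (simp_all add: rf_of_poly_pCons)

lemma rf_of_poly_monom: "rf_of_poly (Polynomial.monom a n) = rf_const a * rf_X ^ n"
  by (metis rf_eval_rf_X rf_eval_monom)

lemma rf_of_poly_smult [simp]: "rf_of_poly (Polynomial.smult a p) = rf_const a * rf_of_poly p"
  by (metis mult_smult_left mult_1 rf_of_poly_simps(4) rf_of_poly_const smult_one)

lemma rf_of_poly_sum: "rf_of_poly (\<Sum>i\<in>A. f i) = (\<Sum>i\<in>A. rf_of_poly (f i))"
  by (simp add: rf_of_poly_eq_to_fract)

lemma rf_eval_dickson1: "rf_eval (dickson1 m) z = poly (dickson1 m) z"
  by (simp add: dickson_def rf_eval_sum poly_sum poly_monom)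

definition reverse_poly :: "nat \<Rightarrow> 'a::comm_monoid_add poly \<Rightarrow> 'a poly" where
  "reverse_poly K p = (\<Sum>i\<le>K. Polynomial.monom (Polynomial.coeff p i) (K - i))"

lemma coeff_reverse_poly:
  "Polynomial.coeff (reverse_poly K p) j = (if j \<le> K then Polynomial.coeff p (K - j) else 0)"
proof -
  have "Polynomial.coeff (reverse_poly K p) j
        = (\<Sum>i\<le>K. if i = K - j \<and> j \<le> K then Polynomial.coeff p i else 0)"
    unfolding reverse_poly_def coeff_sum coeff_monom by (rule sum.cong) auto
  then show ?thesis by (cases "j \<le> K") simp_all
qed

lemma degree_reverse_poly_le: "degree (reverse_poly K p) \<le> K"
  by (rule degree_le) (simp add: coeff_reverse_poly)

lemma rf_eval_inverse_X_mult_power: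
  assumes "degree p \<le> K"
  shows "rf_eval p (inverse rf_X) * rf_X ^ K = rf_of_poly (reverse_poly K p)"
proof -
  have "rf_eval p (inverse rf_X) * rf_X ^ K
        = (\<Sum>i\<le>K. rf_const (Polynomial.coeff p i) * inverse rf_X ^ i * rf_X ^ K)"
    using poly_as_sum_of_monoms'[OF assms] rf_eval_sum[of _ "{..K}"]
    by (metis (no_types, lifting) rf_eval_monom sum.cong sum_distrib_right)
  also have "\<dots> = (\<Sum>i\<le>K. rf_const (Polynomial.coeff p i) * rf_X ^ (K - i))"
  proof (rule sum.cong)
    fix i assume "i \<in> {..K}"
    then have "inverse rf_X ^ i * rf_X ^ K = rf_X ^ (K - i)"
      by (simp add: power_diff power_inverse divide_inverse mult.commute)
    then show "rf_const (Polynomial.coeff p i) * inverse rf_X ^ i * rf_X ^ K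
               = rf_const (Polynomial.coeff p i) * rf_X ^ (K - i)"
      by (metis mult.assoc)
  qed simp
  also have "\<dots> = rf_of_poly (reverse_poly K p)"
    by (simp add: reverse_poly_def rf_of_poly_sum rf_of_poly_monom)
  finally show ?thesis .
qed

lemma rf_eval_inverse_X_nonzero:
  assumes "q \<noteq> 0"
  shows "rf_eval q (inverse rf_X) \<noteq> 0"
proof
  assume "rf_eval q (inverse rf_X) = 0"
  then have "reverse_poly (degree q) q = 0"
    using rf_eval_inverse_X_mult_power[of q "degree q"] by simp
  then have "Polynomial.coeff (reverse_poly (degree q) q) 0 = 0" by simp
  then show False using assms by (simp add: coeff_reverse_poly)
qed

lemma rf_inv_subst_Fract:
  assumes "q \<noteq> 0"
  shows "rf_inv_subst (Fract p q) = rf_eval p (inverse rf_X) / rf_eval q (inverse rf_X)"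
  unfolding rf_inv_subst_def
proof (rule someI2)
  show "\<exists>p' q'. q' \<noteq> 0 \<and> Fract p q = Fract p' q' \<and>
          rf_eval p (inverse rf_X) / rf_eval q (inverse rf_X)
          = rf_eval p' (inverse rf_X) / rf_eval q' (inverse rf_X)"
    using assms by blast
next
  fix s assume "\<exists>p' q'. q' \<noteq> 0 \<and> Fract p q = Fract p' q' \<and>
                  s = rf_eval p' (inverse rf_X) / rf_eval q' (inverse rf_X)"
  then obtain p' q' where q': "q' \<noteq> 0" and "Fract p q = Fract p' q'"
    and s: "s = rf_eval p' (inverse rf_X) / rf_eval q' (inverse rf_X)" by blast
  then have "p * q' = p' * q" using assms by (simp add: eq_fract)
  then have "rf_eval p (inverse rf_X) * rf_eval q' (inverse rf_X)
             = rf_eval p' (inverse rf_X) * rf_eval q (inverse rf_X)"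
    by (metis rf_eval_mult)
  then show "s = rf_eval p (inverse rf_X) / rf_eval q (inverse rf_X)"
    using s assms q' rf_eval_inverse_X_nonzero[of q] rf_eval_inverse_X_nonzero[of q']
    by (simp add: frac_eq_eq)
qed

lemma rf_inv_subst_rf_of_poly [simp]: "rf_inv_subst (rf_of_poly p) = rf_eval p (inverse rf_X)"
  using rf_inv_subst_Fract[of 1 p] by (simp add: rf_of_poly_def)

lemma rf_inv_subst_const [simp]: "rf_inv_subst (rf_const a) = rf_const a"
  using rf_inv_subst_rf_of_poly[of "[:a:]"] by simp

lemma rf_inv_subst_X [simp]: "rf_inv_subst rf_X = inverse rf_X"
  using rf_inv_subst_rf_of_poly[of "[:0, 1:]"] by (simp add: rf_of_poly_X)

lemma rf_inv_subst_0 [simp]: "rf_inv_subst 0 = 0"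
  using rf_inv_subst_const[of 0] by simp

lemma rf_inv_subst_1 [simp]: "rf_inv_subst 1 = 1"
  using rf_inv_subst_const[of 1] by simp

lemma rf_inv_subst_add [simp]: "rf_inv_subst (r + s) = rf_inv_subst r + rf_inv_subst s"
proof (cases r; cases s)
  fix a b c d assume "r = Fract a b" "b \<noteq> 0" "s = Fract c d" "d \<noteq> 0"
  then show ?thesis using rf_eval_inverse_X_nonzero[of b] rf_eval_inverse_X_nonzero[of d]
    by (simp add: rf_inv_subst_Fract field_simps)
qed

lemma rf_inv_subst_mult [simp]: "rf_inv_subst (r * s) = rf_inv_subst r * rf_inv_subst s"
proof (cases r; cases s)
  fix a b c d assume "r = Fract a b" "b \<noteq> 0" "s = Fract c d" "d \<noteq> 0"
  then show ?thesis using rf_eval_inverse_X_nonzero[of b] rf_eval_inverse_X_nonzero[of d]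
    by (simp add: rf_inv_subst_Fract field_simps)
qed

lemma rf_inv_subst_uminus [simp]: "rf_inv_subst (- r) = - rf_inv_subst r"
  by (metis add.right_inverse add_eq_0_iff rf_inv_subst_add rf_inv_subst_0)

lemma rf_inv_subst_diff [simp]: "rf_inv_subst (r - s) = rf_inv_subst r - rf_inv_subst s"
  by (metis diff_conv_add_uminus rf_inv_subst_add rf_inv_subst_uminus)

lemma rf_inv_subst_inverse [simp]: "rf_inv_subst (inverse r) = inverse (rf_inv_subst r)"
proof (cases r)
  fix a b assume r: "r = Fract a b" "b \<noteq> 0"
  show ?thesis
  proof (cases "a = 0")
    case False
    then show ?thesis using r rf_eval_inverse_X_nonzero[of b] rf_eval_inverse_X_nonzero[of a]
      by (simp add: rf_inv_subst_Fract)
  qed (use r in \<open>simp add: fract_collapse\<close>)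
qed

lemma rf_inv_subst_divide [simp]: "rf_inv_subst (r / s) = rf_inv_subst r / rf_inv_subst s"
  by (simp add: divide_inverse)

lemma rf_inv_subst_power [simp]: "rf_inv_subst (r ^ n) = rf_inv_subst r ^ n"
  by (induct n) simp_all

lemma rf_inv_subst_rf_eval: "rf_inv_subst (rf_eval p z) = rf_eval p (rf_inv_subst z)"
  by (induct p) simp_all

section \<open>The fixed field of x \<mapsto> 1/x\<close>

abbreviation rf_u :: "'a::field rf" where
  "rf_u \<equiv> rf_X + inverse rf_X"

lemma rf_inv_subst_rf_u [simp]: "rf_inv_subst rf_u = rf_u"
  by (simp add: add.commute)

lemma rf_of_poly_X2_plus_1: "rf_of_poly [:1, 0, 1:] = rf_X * rf_u"
  by (simp add: rf_of_poly_pCons field_simps)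

definition self_reciprocal :: "nat \<Rightarrow> 'a::field poly \<Rightarrow> bool" where
  "self_reciprocal K P \<longleftrightarrow> degree P \<le> K \<and> reverse_poly K P = P"

lemma self_reciprocal_iff:
  "self_reciprocal K P \<longleftrightarrow> degree P \<le> K \<and> rf_inv_subst (rf_of_poly P) * rf_X ^ K = rf_of_poly P"
  using rf_eval_inverse_X_mult_power[of P K] by (auto simp: self_reciprocal_def)

lemma self_reciprocal_coeff_0:
  "self_reciprocal K P \<Longrightarrow> Polynomial.coeff P 0 = Polynomial.coeff P K"
  by (metis self_reciprocal_def coeff_reverse_poly diff_zero le0)

lemma self_reciprocal_X2_plus_1_power: "self_reciprocal (2 * n) ([:1, 0, 1:] ^ n)"
  unfolding self_reciprocal_iff
proof
  have "degree ([:1, 0, 1:] ^ n :: 'a poly) = n * 2"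
    by (simp add: degree_power_eq)
  then show "degree ([:1, 0, 1:] ^ n :: 'a poly) \<le> 2 * n" by simp
  have "inverse rf_X * rf_u * rf_X ^ 2 = rf_X * (rf_u :: 'a rf)"
    by (simp add: field_simps power2_eq_square)
  then have "(inverse rf_X * rf_u) ^ n * rf_X ^ (2 * n) = (rf_X * (rf_u :: 'a rf)) ^ n"
    by (metis power_mult power_mult_distrib)
  moreover have "rf_inv_subst (rf_of_poly [:1, 0, 1:]) = inverse rf_X * (rf_u :: 'a rf)"
    by (simp only: rf_of_poly_X2_plus_1 rf_inv_subst_mult rf_inv_subst_X rf_inv_subst_rf_u)
  ultimately show "rf_inv_subst (rf_of_poly ([:1, 0, 1:] ^ n)) * rf_X ^ (2 * n)
                   = rf_of_poly ([:1, 0, 1:] ^ n :: 'a poly)"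
    by (simp only: rf_of_poly_power rf_inv_subst_power rf_of_poly_X2_plus_1)
qed

lemma self_reciprocal_diff_smult:
  assumes "self_reciprocal K P" "self_reciprocal K Q"
  shows "self_reciprocal K (P - Polynomial.smult c Q)"
proof -
  have "degree (P - Polynomial.smult c Q) \<le> K"
    using assms by (meson self_reciprocal_def degree_diff_le degree_smult_le order.trans)
  then show ?thesis using assms by (simp add: self_reciprocal_iff algebra_simps)
qed

lemma self_reciprocal_divide_X:
  assumes P: "self_reciprocal (K + 2) P" and top: "Polynomial.coeff P (K + 2) = 0"
  obtains P' where "P = [:0, 1:] * P'" "self_reciprocal K P'"
proof -
  have "poly P 0 = 0" using self_reciprocal_coeff_0[OF P] top by (simp add: poly_0_coeff_0)
  then obtain P' where P': "P = [:0, 1:] * P'" using dvd_iff_poly_eq_0[of 0 P] by auto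
  have "degree P' \<le> K"
  proof (cases "P' = 0")
    case False
    have "degree P \<noteq> K + 2" using top False P' by (metis leading_coeff_0_iff mult_eq_0_iff pCons_eq_0_iff
          zero_neq_one)
    then have "degree P \<le> K + 1" using P by (simp add: self_reciprocal_def)
    then show ?thesis using False P' by (simp add: degree_mult_eq)
  qed simp
  moreover have "rf_inv_subst (rf_of_poly P') * rf_X ^ K = rf_of_poly P'"
  proof -
    have "inverse rf_X * rf_inv_subst (rf_of_poly P') * (rf_X ^ K * rf_X * rf_X) = rf_X * rf_of_poly P'"
      using P P' by (simp add: self_reciprocal_iff rf_of_poly_pCons algebra_simps power_add numeral_2_eq_2)
    then show ?thesis by (simp add: field_simps)
  qed
  ultimately show ?thesis using that P' by (simp add: self_reciprocal_iff)
qed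

lemma self_reciprocal_eq_rf_eval_u:
  assumes "self_reciprocal (2 * M) P"
  shows "\<exists>Q. rf_of_poly P = rf_eval Q rf_u * rf_X ^ M"
  using assms
proof (induction M arbitrary: P)
  case 0
  then obtain a where "P = [:a:]" by (metis self_reciprocal_def degree_0_id le_zero_eq mult_0_right)
  then show ?case by (intro exI[of _ "[:a:]"]) simp
next
  case (Suc M)
  txt \<open>Subtracting the top coefficient times (x^2 + 1)^(M+1) = (x u)^(M+1) leaves a
    self-reciprocal polynomial vanishing at 0, i.e. x times one of degree 2M.\<close>
  define U :: "'a poly" where "U = [:1, 0, 1:] ^ Suc M"
  define c where "c = Polynomial.coeff P (2 * M + 2)"
  have U: "self_reciprocal (2 * M + 2) U"
    using self_reciprocal_X2_plus_1_power[of "Suc M"] by (simp add: U_def)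
  have "degree U = 2 * M + 2"
    unfolding U_def by (subst degree_power_eq) simp_all
  moreover have "lead_coeff U = 1"
    unfolding U_def lead_coeff_power by simp
  ultimately have "Polynomial.coeff U (2 * M + 2) = 1" by simp
  then obtain P' where P': "P - Polynomial.smult c U = [:0, 1:] * P'" "self_reciprocal (2 * M) P'"
    using self_reciprocal_divide_X[OF self_reciprocal_diff_smult[OF _ U, of P c]] Suc.prems
    by (auto simp: c_def)
  obtain Q where Q: "rf_of_poly P' = rf_eval Q rf_u * rf_X ^ M" using Suc.IH[OF P'(2)] by blast
  have "P = [:0, 1:] * P' + Polynomial.smult c U" using P'(1) by (simp add: algebra_simps)
  then have "rf_of_poly P = rf_X * rf_of_poly P' + rf_const c * rf_of_poly U"
    by (simp only: rf_of_poly_simps rf_of_poly_smult rf_of_poly_X)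
  also have "\<dots> = rf_X * (rf_eval Q rf_u * rf_X ^ M) + rf_const c * (rf_X * rf_u) ^ Suc M"
    by (simp only: Q U_def rf_of_poly_power rf_of_poly_X2_plus_1)
  also have "\<dots> = rf_eval (Q + Polynomial.monom c (Suc M)) rf_u * rf_X ^ Suc M"
  proof -
    have "x * (a * x ^ M) + k * (x * b) ^ Suc M = (a + k * b ^ Suc M) * x ^ Suc M" for a b k x :: "'a rf"
      by (simp add: algebra_simps power_mult_distrib)
    then show ?thesis by (simp only: rf_eval_add rf_eval_monom)
  qed
  finally show ?case by blast
qed

lemma rf_inv_subst_fixed_eq_rf_eval_u:
  assumes "z * rf_X ^ M = rf_of_poly P" "degree P \<le> 2 * M" "rf_inv_subst z = z"
  shows "\<exists>Q. z = rf_eval Q rf_u"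
proof -
  have "rf_inv_subst (rf_of_poly P) = z * inverse rf_X ^ M"
    using arg_cong[OF assms(1), of rf_inv_subst] assms(3) by simp
  then have "rf_inv_subst (rf_of_poly P) * rf_X ^ (2 * M) = z * rf_X ^ M * (inverse rf_X ^ M * rf_X ^ M)"
    by (simp add: mult_2 power_add)
  also have "\<dots> = rf_of_poly P" using assms(1) by (simp add: power_inverse)
  finally have "self_reciprocal (2 * M) P" using assms(2) by (simp add: self_reciprocal_iff)
  then obtain Q where "z * rf_X ^ M = rf_eval Q rf_u * rf_X ^ M"
    using self_reciprocal_eq_rf_eval_u assms(1) by metis
  then show ?thesis by auto
qed

lemma rf_inv_subst_fixed_eq_quotient:
  assumes "rf_inv_subst r = r"
  shows "\<exists>P Q. rf_eval Q rf_u \<noteq> 0 \<and> r = rf_eval P rf_u / rf_eval Q rf_u"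
proof (cases r)
  case (Fract p q)
  define M where "M = degree p + degree q"
  define D where "D = rf_of_poly q * rf_inv_subst (rf_of_poly q)"
  define R where "R = reverse_poly (degree q) q * [:0, 1:] ^ degree p"
  have D_nonzero: "D \<noteq> 0"
    using Fract(2) rf_eval_inverse_X_nonzero[of q] by (simp add: D_def)
  have R: "rf_inv_subst (rf_of_poly q) * rf_X ^ M = rf_of_poly R"
    using rf_eval_inverse_X_mult_power[of q "degree q"]
    by (simp add: R_def M_def power_add rf_of_poly_X algebra_simps)
  have degree_R: "degree R \<le> degree q + degree p"
    unfolding R_def using degree_reverse_poly_le[of "degree q" q]
      degree_mult_le[of "reverse_poly (degree q) q" "[:0, 1:] ^ degree p"]
    by (simp add: degree_power_eq)
  have "\<exists>Q. D = rf_eval Q rf_u"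
  proof (rule rf_inv_subst_fixed_eq_rf_eval_u)
    show "D * rf_X ^ M = rf_of_poly (q * R)" using R by (simp add: D_def mult.assoc)
    show "degree (q * R) \<le> 2 * M"
      using degree_R degree_mult_le[of q R] by (simp add: M_def)
    show "rf_inv_subst D = D" by (simp add: D_def mult.commute rf_inv_subst_rf_eval rf_eval_rf_X)
  qed
  moreover have "\<exists>P. r * D = rf_eval P rf_u"
  proof (rule rf_inv_subst_fixed_eq_rf_eval_u)
    show "r * D * rf_X ^ M = rf_of_poly (p * R)"
      using R Fract by (simp add: D_def Fract_eq_rf_of_poly_divide mult.assoc)
    show "degree (p * R) \<le> 2 * M"
      using degree_R degree_mult_le[of p R] by (simp add: M_def)
    show "rf_inv_subst (r * D) = r * D"
      using assms by (simp add: D_def mult.commute rf_inv_subst_rf_eval rf_eval_rf_X)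
  qed
  ultimately show ?thesis using D_nonzero by (metis nonzero_mult_div_cancel_right)
qed

lemma rf_X_power_mult_rf_eval_u:
  "\<exists>T. degree T = 2 * degree p \<and> lead_coeff T = lead_coeff p \<and>
       rf_X ^ degree p * rf_eval p rf_u = rf_of_poly T"
proof (induction p)
  case (pCons a p)
  show ?case
  proof (cases "p = 0")
    case False
    define d where "d = degree p"
    obtain T where T: "degree T = 2 * d" "lead_coeff T = lead_coeff p" "rf_X ^ d * rf_eval p rf_u = rf_of_poly T"
      using pCons.IH by (auto simp: d_def)
    define U :: "'a poly" where "U = [:1, 0, 1:]"
    have "U \<noteq> 0" "degree U = 2" "lead_coeff U = 1" by (simp_all add: U_def)
    moreover have "T \<noteq> 0" using T(2) False by auto
    ultimately have degree_UT: "degree (U * T) = 2 * d + 2" and lead_UT: "lead_coeff (U * T) = lead_coeff p"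
      using T lead_coeff_mult[of U T] by (simp_all add: degree_mult_eq)
    have "degree (Polynomial.monom a (Suc d)) < degree (U * T)"
      using degree_UT degree_monom_le[of a "Suc d"] by linarith
    then have "degree (Polynomial.monom a (Suc d) + U * T) = 2 * degree (pCons a p)"
      and "lead_coeff (Polynomial.monom a (Suc d) + U * T) = lead_coeff (pCons a p)"
      using degree_UT lead_UT False by (simp_all add: degree_add_eq_right lead_coeff_add_le d_def)
    moreover have "rf_X ^ degree (pCons a p) * rf_eval (pCons a p) rf_u
        = rf_of_poly (Polynomial.monom a (Suc d) + U * T)"
    proof -
      have "rf_X ^ degree (pCons a p) * rf_eval (pCons a p) rf_u
            = rf_const a * rf_X ^ Suc d + rf_X * rf_u * (rf_X ^ d * rf_eval p rf_u)"
        using False by (simp add: d_def algebra_simps)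
      then show ?thesis
        using T(3) by (simp only: rf_of_poly_simps rf_of_poly_monom U_def rf_of_poly_X2_plus_1)
    qed
    ultimately show ?thesis by blast
  qed (auto intro: exI[of _ "[:a:]"])
qed (auto intro: exI[of _ 0])

lemma rf_eval_u_nonzero:
  assumes "p \<noteq> 0"
  shows "rf_eval p rf_u \<noteq> 0"
proof -
  obtain T where "lead_coeff T = lead_coeff p" "rf_X ^ degree p * rf_eval p rf_u = rf_of_poly T"
    using rf_X_power_mult_rf_eval_u by blast
  then show ?thesis using assms by auto
qed

section \<open>The function field of y^2 = f and its twisted involutions\<close>

lemma FF_carrier [simp]: "carrier (FF f) = UNIV"
  by (simp add: FF_def)

lemma FF_mult_eq:
  "x \<otimes>\<^bsub>FF f\<^esub> y = (fst x * fst y + snd x * snd y * rf_of_poly f, fst x * snd y + snd x * fst y)"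
  by (simp add: FF_def split_def)

lemma FF_add_eq: "x \<oplus>\<^bsub>FF f\<^esub> y = (fst x + fst y, snd x + snd y)"
  by (simp add: FF_def split_def)

lemma FF_one_eq: "\<one>\<^bsub>FF f\<^esub> = (1, 0)"
  by (simp add: FF_def)

lemma FF_zero_eq: "\<zero>\<^bsub>FF f\<^esub> = (0, 0)"
  by (simp add: FF_def)

lemma FF_a_inv_eq: "\<ominus>\<^bsub>FF f\<^esub> x = (- fst x, - snd x)"
  unfolding a_inv_def m_inv_def
  by (rule the_equality) (auto simp: FF_def split_def eq_neg_iff_add_eq_0 add.commute)

lemma FF_norm_nonzero:
  assumes nonsquare: "\<And>r. r * r \<noteq> rf_of_poly f" and "(a, b) \<noteq> (0, 0)"
  shows "a * a - b * b * rf_of_poly f \<noteq> 0"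
proof
  assume norm: "a * a - b * b * rf_of_poly f = 0"
  show False
  proof (cases "b = 0")
    case False
    then have "(a / b) * (a / b) = rf_of_poly f" using norm by (simp add: field_simps)
    then show False using nonsquare by blast
  qed (use norm assms(2) in simp)
qed

lemma FF_m_inv_eq:
  assumes nonsquare: "\<And>r. r * r \<noteq> rf_of_poly f" and "x \<noteq> \<zero>\<^bsub>FF f\<^esub>"
  defines "N \<equiv> fst x * fst x - snd x * snd x * rf_of_poly f"
  shows "inv\<^bsub>FF f\<^esub> x = (fst x / N, - snd x / N)"
  unfolding m_inv_def
proof (rule the_equality)
  obtain a b where x: "x = (a, b)" by fastforce
  have N: "N \<noteq> 0"
    using FF_norm_nonzero[OF nonsquare, of a b] assms(2) x by (simp add: N_def FF_zero_eq)
  let ?y = "(fst x / N, - snd x / N)"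
  show "?y \<in> carrier (FF f) \<and> x \<otimes>\<^bsub>FF f\<^esub> ?y = \<one>\<^bsub>FF f\<^esub> \<and> ?y \<otimes>\<^bsub>FF f\<^esub> x = \<one>\<^bsub>FF f\<^esub>"
  proof -
    have "(a * a - b * b * rf_of_poly f) / N = 1" using N by (simp add: N_def x)
    then have "a * (a / N) + b * (- b / N) * rf_of_poly f = 1" "a * (- b / N) + b * (a / N) = 0"
      by (simp_all add: field_simps)
    then show ?thesis by (simp add: FF_mult_eq FF_one_eq x algebra_simps)
  qed
  fix y assume "y \<in> carrier (FF f) \<and> x \<otimes>\<^bsub>FF f\<^esub> y = \<one>\<^bsub>FF f\<^esub> \<and> y \<otimes>\<^bsub>FF f\<^esub> x = \<one>\<^bsub>FF f\<^esub>"
  then have e1: "a * fst y + b * snd y * rf_of_poly f = 1" and e2: "a * snd y + b * fst y = 0"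
    by (auto simp: FF_mult_eq FF_one_eq x)
  have "N * fst y = a * (a * fst y + b * snd y * rf_of_poly f) - b * rf_of_poly f * (a * snd y + b * fst y)"
    and "N * snd y = a * (a * snd y + b * fst y) - b * (a * fst y + b * snd y * rf_of_poly f)"
    by (simp_all add: N_def x algebra_simps)
  then have "N * fst y = a" "N * snd y = - b" using e1 e2 by simp_all
  then show "y = (fst x / N, - snd x / N)"
    using N x by (metis nonzero_mult_div_cancel_left prod.collapse fst_conv snd_conv)
qed

lemma FF_eval_Pair_0: "FF_eval f p (r, 0) = (rf_eval p r, 0)"
proof (induction p)
  case (pCons a p)
  define F where "F = (\<lambda>a acc. FF_const a \<oplus>\<^bsub>FF f\<^esub> ((r, 0) \<otimes>\<^bsub>FF f\<^esub> acc))"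
  have fold: "FF_eval f q (r, 0) = fold_coeffs F q \<zero>\<^bsub>FF f\<^esub>" for q
    by (simp add: FF_eval_def F_def fold_coeffs_def)
  show ?case
  proof (cases "a = 0 \<and> p = 0")
    case False
    then have "FF_eval f (pCons a p) (r, 0) = F a (FF_eval f p (r, 0))" by (auto simp: fold)
    then show ?thesis using pCons.IH by (simp add: F_def FF_const_def FF_add_eq FF_mult_eq)
  qed (simp add: FF_eval_def FF_zero_eq)
qed (simp add: FF_eval_def FF_zero_eq)

lemma rf_eval_Pair_0_in_generate_field:
  assumes "range FF_const \<subseteq> S" "(z, 0) \<in> S"
  shows "(rf_eval p z, 0) \<in> generate_field (FF f) S"
proof (induction p)
  case 0
  have "FF_const 0 \<in> S" using assms(1) by blast
  then show ?case by (simp add: FF_const_def generate_field.incl)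
next
  case (pCons a p)
  have "FF_const a \<oplus>\<^bsub>FF f\<^esub> ((z, 0) \<otimes>\<^bsub>FF f\<^esub> (rf_eval p z, 0)) \<in> generate_field (FF f) S"
    using assms pCons.IH by (blast intro: generate_field.incl generate_field.eng_add generate_field.eng_mult)
  then show ?case by (simp add: FF_const_def FF_add_eq FF_mult_eq)
qed

lemma rf_inv_subst_fixed_in_generate_field:
  assumes nonsquare: "\<And>r. r * r \<noteq> rf_of_poly f"
    and S: "range FF_const \<subseteq> S" "(rf_u, 0) \<in> S" and fixed: "rf_inv_subst r = r"
  shows "(r, 0) \<in> generate_field (FF f) S"
proof -
  obtain P Q where Q: "rf_eval Q rf_u \<noteq> 0" and r: "r = rf_eval P rf_u / rf_eval Q rf_u"
    using rf_inv_subst_fixed_eq_quotient[OF fixed] by blast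
  let ?q = "(rf_eval Q rf_u, 0)"
  have "?q \<noteq> \<zero>\<^bsub>FF f\<^esub>" using Q by (simp add: FF_zero_eq)
  then have "(rf_eval P rf_u, 0) \<otimes>\<^bsub>FF f\<^esub> inv\<^bsub>FF f\<^esub> ?q \<in> generate_field (FF f) S"
    using rf_eval_Pair_0_in_generate_field[OF S] by (blast intro: generate_field.eng_mult generate_field.m_inv)
  moreover have "inv\<^bsub>FF f\<^esub> ?q = (inverse (rf_eval Q rf_u), 0)"
    using FF_m_inv_eq[OF nonsquare, of ?q] Q by (simp add: FF_zero_eq field_simps)
  ultimately show ?thesis using r by (simp add: FF_mult_eq divide_inverse)
qed

lemma generate_field_snd_eq_0:
  assumes nonsquare: "\<And>r. r * r \<noteq> rf_of_poly f"
    and S: "\<And>z. z \<in> S \<Longrightarrow> snd z = 0" and "z \<in> generate_field (FF f) S"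
  shows "snd z = 0"
  using assms(3)
proof (induction rule: generate_field.induct)
  case (m_inv h) then show ?case by (simp add: FF_m_inv_eq[OF nonsquare])
qed (simp_all add: S FF_one_eq FF_a_inv_eq FF_add_eq FF_mult_eq)

text \<open>Pullback along (x, y) \<mapsto> (1/x, k y), where the pair (a, b) stands for a + b y.\<close>
definition twisted_inv_subst :: "'a::field rf \<Rightarrow> 'a rf \<times> 'a rf \<Rightarrow> 'a rf \<times> 'a rf" where
  "twisted_inv_subst k = (\<lambda>(a, b). (rf_inv_subst a, k * rf_inv_subst b))"

lemma in_fixed_field_twisted_inv_subst_iff:
  "z \<in> fixed_field (twisted_inv_subst k) \<longleftrightarrow>
     rf_inv_subst (fst z) = fst z \<and> k * rf_inv_subst (snd z) = snd z"
  by (cases z) (simp add: fixed_field_def twisted_inv_subst_def)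

lemma rf_inv_subst_twisted_product:
  assumes k: "k * rf_inv_subst k = 1" "rf_inv_subst F = k * k * F"
    and "k * rf_inv_subst b = b" "k * rf_inv_subst d = d"
  shows "rf_inv_subst (b * d * F) = b * d * F"
proof -
  have twisted: "rf_inv_subst b = rf_inv_subst k * b" if "k * rf_inv_subst b = b" for b
  proof -
    have "rf_inv_subst k * b = rf_inv_subst k * (k * rf_inv_subst b)" using that by simp
    also have "\<dots> = (k * rf_inv_subst k) * rf_inv_subst b" by (simp only: ac_simps)
    finally show ?thesis using k(1) by simp
  qed
  have "rf_inv_subst (b * d * F) = (k * rf_inv_subst k) * (k * rf_inv_subst k) * (b * d * F)"
    using twisted[OF assms(3)] twisted[OF assms(4)] k(2) by (simp add: algebra_simps)
  then show ?thesis using k(1) by simp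
qed

lemma generate_field_subset_fixed_field_twisted:
  assumes nonsquare: "\<And>r. r * r \<noteq> rf_of_poly f"
    and k: "k * rf_inv_subst k = 1" "rf_inv_subst (rf_of_poly f) = k * k * rf_of_poly f"
    and S: "S \<subseteq> fixed_field (twisted_inv_subst k)"
  shows "generate_field (FF f) S \<subseteq> fixed_field (twisted_inv_subst k)"
proof
  note square = rf_inv_subst_twisted_product[OF k]
  fix z assume "z \<in> generate_field (FF f) S"
  then show "z \<in> fixed_field (twisted_inv_subst k)"
  proof (induction rule: generate_field.induct)
    case (m_inv h)
    obtain a b where h: "h = (a, b)" by fastforce
    then have a: "rf_inv_subst a = a" and b: "k * rf_inv_subst b = b"
      using m_inv.IH by (auto simp: in_fixed_field_twisted_inv_subst_iff)
    define N where "N = a * a - b * b * rf_of_poly f"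
    have "rf_inv_subst N = N" using a square[OF b b] by (simp add: N_def)
    moreover have "inv\<^bsub>FF f\<^esub> h = (a / N, - b / N)"
      using FF_m_inv_eq[OF nonsquare m_inv.hyps(2)] h by (simp add: N_def)
    ultimately show ?case using a b by (simp add: in_fixed_field_twisted_inv_subst_iff algebra_simps)
  next
    case (eng_mult h1 h2)
    obtain a b c d where h: "h1 = (a, b)" "h2 = (c, d)" by fastforce
    then have a: "rf_inv_subst a = a" and b: "k * rf_inv_subst b = b"
      and c: "rf_inv_subst c = c" and d: "k * rf_inv_subst d = d"
      using eng_mult.IH by (auto simp: in_fixed_field_twisted_inv_subst_iff)
    have "k * rf_inv_subst (a * d + b * c) = a * (k * rf_inv_subst d) + (k * rf_inv_subst b) * c"
      using a c by (simp add: algebra_simps)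
    then show ?case
      using a b c d square[OF b d] h by (simp add: FF_mult_eq in_fixed_field_twisted_inv_subst_iff)
  next
    case (eng_add h1 h2)
    then show ?case by (simp add: FF_add_eq in_fixed_field_twisted_inv_subst_iff distrib_left)
  qed (use S in \<open>auto simp: FF_one_eq FF_a_inv_eq in_fixed_field_twisted_inv_subst_iff\<close>)
qed

lemma quotient_given_by_twisted_inv_subst:
  assumes nonsquare: "\<And>r. r * r \<noteq> rf_of_poly f"
    and k: "k * rf_inv_subst k = 1" "rf_inv_subst (rf_of_poly f) = k * k * rf_of_poly f"
    and w: "w \<noteq> 0" "k * rf_inv_subst w = w"
    and h: "rf_eval h rf_u = w * w * rf_of_poly f"
  shows "quotient_given_by f (twisted_inv_subst k) h"
proof -
  let ?G = "generate_field (FF f)"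
  let ?Fix = "fixed_field (twisted_inv_subst k)"
  define u :: "'a rf \<times> 'a rf" where "u = (rf_u, 0)"
  define v :: "'a rf \<times> 'a rf" where "v = (0, w)"
  have uv: "u \<in> ?Fix" "v \<in> ?Fix"
    using w(2) by (simp_all add: in_fixed_field_twisted_inv_subst_iff u_def v_def)
  have "FF_transcendental f u"
    using rf_eval_u_nonzero[where 'a='a] by (simp add: FF_transcendental_def u_def FF_eval_Pair_0 FF_zero_eq)
  moreover have "v \<notin> FF_gen f {u}"
  proof -
    have "snd z = 0" if "z \<in> range FF_const \<union> {u}" for z
      using that by (auto simp: FF_const_def u_def)
    then have "snd z = 0" if "z \<in> FF_gen f {u}" for z
      using generate_field_snd_eq_0[OF nonsquare] that unfolding FF_gen_def by blast
    then show ?thesis using w(1) by (auto simp: v_def)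
  qed
  moreover have "v \<otimes>\<^bsub>FF f\<^esub> v = FF_eval f h u"
    by (simp add: u_def v_def FF_mult_eq FF_eval_Pair_0 h)
  moreover have "FF_gen f {u, v} \<subseteq> ?Fix"
    unfolding FF_gen_def using uv
    by (intro generate_field_subset_fixed_field_twisted[OF nonsquare k])
      (auto simp: FF_const_def in_fixed_field_twisted_inv_subst_iff)
  moreover have "?Fix \<subseteq> FF_gen f {u, v}"
  proof
    txt \<open>A fixed a + b y equals a + (b/w) v, and both a and b/w are \<sigma>-invariant.\<close>
    fix z assume "z \<in> ?Fix"
    then obtain a b where z: "z = (a, b)" and a: "rf_inv_subst a = a" and b: "k * rf_inv_subst b = b"
      by (cases z) (auto simp: in_fixed_field_twisted_inv_subst_iff)
    let ?S = "range FF_const \<union> {u, v}"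
    have S: "range FF_const \<subseteq> ?S" "(rf_u, 0) \<in> ?S" by (auto simp: u_def)
    have "rf_inv_subst (b / w) = (k * rf_inv_subst b) / (k * rf_inv_subst w)"
      using k(1) by (auto simp: field_simps)
    then have "rf_inv_subst (b / w) = b / w" using b w(2) by simp
    then have "(a, 0) \<oplus>\<^bsub>FF f\<^esub> ((b / w, 0) \<otimes>\<^bsub>FF f\<^esub> v) \<in> ?G ?S"
      using rf_inv_subst_fixed_in_generate_field[OF nonsquare S] a
      by (blast intro: generate_field.incl generate_field.eng_add generate_field.eng_mult)
    then show "z \<in> FF_gen f {u, v}"
      using w(1) z by (simp add: FF_gen_def FF_add_eq FF_mult_eq v_def)
  qed
  ultimately show ?thesis
    unfolding quotient_given_by_def using uv by blast
qed

section \<open>The curve C'\<close>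

lemma degree_Cpoly:
  assumes "g \<ge> 1"
  shows "degree (Cpoly g (c::'a::field)) = 2 * g + 1"
proof (rule antisym)
  show "degree (Cpoly g c) \<le> 2 * g + 1"
    by (rule degree_le) (auto simp: Cpoly_def coeff_monom)
  show "2 * g + 1 \<le> degree (Cpoly g c)"
    by (rule le_degree) (use assms in \<open>simp add: Cpoly_def coeff_monom\<close>)
qed

lemma rf_of_poly_not_square_if_odd_degree:
  assumes "odd (degree f)"
  shows "r * r \<noteq> rf_of_poly f"
proof
  assume square: "r * r = rf_of_poly f"
  obtain p q where r: "r = Fract p q" "q \<noteq> 0" by (cases r) auto
  then have "p * p = f * (q * q)" using square by (simp add: rf_of_poly_def eq_fract)
  moreover have "f \<noteq> 0" using assms by auto
  ultimately have "degree p + degree p = degree f + (degree q + degree q)"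
    using r(2) by (metis degree_mult_eq mult_eq_0_iff)
  then show False using assms by presburger
qed

lemma rf_of_poly_Cpoly:
  "rf_of_poly (Cpoly g c) = rf_X ^ (2 * g + 1) + rf_const c * rf_X ^ (g + 1) + rf_X"
  by (simp add: Cpoly_def rf_of_poly_monom)

lemma rf_inv_subst_Cpoly:
  "rf_inv_subst (rf_of_poly (Cpoly g c))
     = inverse (rf_X ^ (g + 1)) * inverse (rf_X ^ (g + 1)) * rf_of_poly (Cpoly g c)"
proof -
  define T :: "'a rf" where "T = rf_X ^ g"
  have powers: "rf_X ^ (2 * g + 1) = rf_X * T * T" "rf_X ^ (g + 1) = rf_X * T"
    by (simp_all add: T_def power_add mult_2)
  have "T \<noteq> 0" by (simp add: T_def)
  then show ?thesis
    unfolding rf_of_poly_Cpoly powers by (simp add: T_def field_simps power_inverse)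
qed

lemma quotient_given_by_Cpoly:
  assumes "g \<ge> 1" and sign: "e = 1 \<or> e = -1"
    and w: "w \<noteq> 0" "rf_inv_subst w = e * rf_X ^ (g + 1) * w"
    and h: "rf_eval h rf_u = w * w * rf_of_poly (Cpoly g c)"
  shows "quotient_given_by (Cpoly g c) (twisted_inv_subst (e * inverse (rf_X ^ (g + 1)))) h"
proof (rule quotient_given_by_twisted_inv_subst[OF _ _ _ w(1) _ h])
  define P :: "'a rf" where "P = rf_X ^ (g + 1)"
  have P: "P \<noteq> 0" "rf_inv_subst P = inverse P" by (simp_all add: P_def power_inverse)
  have "e * e = 1" using sign by auto
  then show "e * inverse (rf_X ^ (g + 1)) * rf_inv_subst (e * inverse (rf_X ^ (g + 1))) = 1"
    and "e * inverse (rf_X ^ (g + 1)) * rf_inv_subst w = w"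
    and "rf_inv_subst (rf_of_poly (Cpoly g c))
         = e * inverse (rf_X ^ (g + 1)) * (e * inverse (rf_X ^ (g + 1))) * rf_of_poly (Cpoly g c)"
    using sign P w(2) unfolding rf_inv_subst_Cpoly P_def[symmetric] by (auto simp: field_simps)
  show "r * r \<noteq> rf_of_poly (Cpoly g c)" for r
    by (rule rf_of_poly_not_square_if_odd_degree) (simp add: degree_Cpoly[OF assms(1)])
qed

lemma quotient_given_by_act_s:
  assumes "g \<ge> 1" "w \<noteq> 0" "rf_inv_subst w = rf_X ^ (g + 1) * w"
    and "rf_eval h rf_u = w * w * rf_of_poly (Cpoly g c)"
  shows "quotient_given_by (Cpoly g c) (act_s g) h"
proof -
  have "act_s g = twisted_inv_subst (1 * inverse ((rf_X :: 'a rf) ^ (g + 1)))"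
    by (simp add: fun_eq_iff act_s_def twisted_inv_subst_def divide_inverse mult.commute)
  moreover have "quotient_given_by (Cpoly g c) (twisted_inv_subst (1 * inverse (rf_X ^ (g + 1)))) h"
    using quotient_given_by_Cpoly[of g 1 w h c] assms by simp
  ultimately show ?thesis by simp
qed

lemma quotient_given_by_act_s_omega:
  assumes "g \<ge> 1" "w \<noteq> 0" "rf_inv_subst w = - (rf_X ^ (g + 1) * w)"
    and "rf_eval h rf_u = w * w * rf_of_poly (Cpoly g c)"
  shows "quotient_given_by (Cpoly g c) (act_s_omega g) h"
proof -
  have "act_s_omega g = twisted_inv_subst (- 1 * inverse ((rf_X :: 'a rf) ^ (g + 1)))"
    by (simp add: fun_eq_iff act_s_omega_def twisted_inv_subst_def divide_inverse mult.commute)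
  moreover have "quotient_given_by (Cpoly g c) (twisted_inv_subst (- 1 * inverse (rf_X ^ (g + 1)))) h"
    using quotient_given_by_Cpoly[of g "- 1" w h c] assms by simp
  ultimately show ?thesis by simp
qed

lemma rf_eval_dickson1_plus_const_u:
  assumes "g \<ge> 1"
  shows "rf_eval (dickson1 g + [:c:]) rf_u = rf_X ^ g + inverse (rf_X ^ g) + rf_const c"
  using poly_dickson1_add_inverse[of rf_X g] assms by (simp add: rf_eval_dickson1 power_inverse)

lemma quotients_of_Cpoly_odd:
  assumes "g + 1 = 2 * m"
  shows "quotient_given_by (Cpoly g c) (act_s g) (dickson1 g + [:c:])"
    and "quotient_given_by (Cpoly g c) (act_s_omega g) ([:-4, 0, 1:] * (dickson1 g + [:c:]))"
proof -
  define t :: "'a rf" where "t = rf_X ^ m"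
  have g: "g \<ge> 1" using assms by presburger
  have t: "t \<noteq> 0" "rf_inv_subst t = inverse t" by (simp_all add: t_def power_inverse)
  have p1: "rf_X ^ (g + 1) = t * t" unfolding assms t_def by (simp add: mult_2 power_add)
  then have pg: "rf_X ^ g = t * t / rf_X" by (simp add: field_simps)
  have "rf_X ^ (2 * g + 1) = rf_X ^ (g + 1) * rf_X ^ (g :: nat)"
    by (simp add: mult_2 flip: power_add)
  also have "\<dots> = t * t * t * t / rf_X" by (simp only: p1 pg times_divide_eq_right mult.assoc)
  finally have p2: "rf_X ^ (2 * g + 1) = t * t * t * t / rf_X" .
  have C: "rf_of_poly (Cpoly g c) = t * t * t * t / rf_X + rf_const c * (t * t) + rf_X"
    by (simp only: rf_of_poly_Cpoly p1 p2)
  have D: "rf_eval (dickson1 g + [:c:]) rf_u = t * t / rf_X + rf_X / (t * t) + rf_const c"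
    by (simp only: rf_eval_dickson1_plus_const_u[OF g] pg inverse_divide)
  define w where "w = inverse t"
  have "w \<noteq> 0" using t by (simp add: w_def)
  moreover have "rf_inv_subst w = rf_X ^ (g + 1) * w"
    unfolding p1 w_def using t(1) by (simp add: t(2) field_simps)
  moreover have "rf_eval (dickson1 g + [:c:]) rf_u = w * w * rf_of_poly (Cpoly g c)"
    unfolding C D w_def using t by (simp add: field_simps)
  ultimately show "quotient_given_by (Cpoly g c) (act_s g) (dickson1 g + [:c:])"
    by (rule quotient_given_by_act_s[OF g])
  define w' where "w' = (rf_X - inverse rf_X) * inverse t"
  have "w' \<noteq> 0" using t rf_X_diff_inverse_nonzero by (simp add: w'_def)
  moreover have "rf_inv_subst w' = - (rf_X ^ (g + 1) * w')"
    unfolding p1 w'_def using t(1) by (simp add: t(2) field_simps)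
  moreover have "rf_eval ([:-4, 0, 1:] * (dickson1 g + [:c:])) rf_u = w' * w' * rf_of_poly (Cpoly g c)"
    unfolding rf_eval_mult C D w'_def using t by (simp add: field_simps)
  ultimately show "quotient_given_by (Cpoly g c) (act_s_omega g) ([:-4, 0, 1:] * (dickson1 g + [:c:]))"
    by (rule quotient_given_by_act_s_omega[OF g])
qed

lemma quotients_of_Cpoly_even:
  assumes "g = 2 * m" "g \<ge> 1"
  shows "quotient_given_by (Cpoly g c) (act_s g) ([:2, 1:] * (dickson1 g + [:c:]))"
    and "quotient_given_by (Cpoly g c) (act_s_omega g) ([:-2, 1:] * (dickson1 g + [:c:]))"
proof -
  define t :: "'a rf" where "t = rf_X ^ m"
  have t: "t \<noteq> 0" "rf_inv_subst t = inverse t" by (simp_all add: t_def power_inverse)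
  have pg: "rf_X ^ g = t * t" unfolding assms(1) t_def by (simp add: mult_2 power_add)
  have p1: "rf_X ^ (g + 1) = rf_X * t * t" by (simp add: pg mult.assoc)
  have p2: "rf_X ^ (2 * g + 1) = rf_X * t * t * t * t"
    by (simp add: mult_2 power_add pg mult.assoc)
  have C: "rf_of_poly (Cpoly g c) = rf_X * t * t * t * t + rf_const c * (rf_X * t * t) + rf_X"
    by (simp only: rf_of_poly_Cpoly p1 p2)
  have D: "rf_eval (dickson1 g + [:c:]) rf_u = t * t + inverse (t * t) + rf_const c"
    by (simp only: rf_eval_dickson1_plus_const_u[OF assms(2)] pg)
  define w where "w = (rf_X + 1) * inverse (rf_X * t)"
  have "w \<noteq> 0" using t rf_X_add_const_nonzero[of "1 :: 'a"] by (simp add: w_def)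
  moreover have "rf_inv_subst w = rf_X ^ (g + 1) * w"
    unfolding p1 w_def using t(1) by (simp add: t(2) field_simps)
  moreover have "rf_eval ([:2, 1:] * (dickson1 g + [:c:])) rf_u = w * w * rf_of_poly (Cpoly g c)"
    unfolding rf_eval_mult C D w_def using t by (simp add: field_simps)
  ultimately show "quotient_given_by (Cpoly g c) (act_s g) ([:2, 1:] * (dickson1 g + [:c:]))"
    by (rule quotient_given_by_act_s[OF assms(2)])
  define w' where "w' = (rf_X - 1) * inverse (rf_X * t)"
  have "w' \<noteq> 0" using t rf_X_add_const_nonzero[of "- 1 :: 'a"] by (simp add: w'_def)
  moreover have "rf_inv_subst w' = - (rf_X ^ (g + 1) * w')"
    unfolding p1 w'_def using t(1) by (simp add: t(2) field_simps)
  moreover have "rf_eval ([:-2, 1:] * (dickson1 g + [:c:])) rf_u = w' * w' * rf_of_poly (Cpoly g c)"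
    unfolding rf_eval_mult C D w'_def using t by (simp add: field_simps)
  ultimately show "quotient_given_by (Cpoly g c) (act_s_omega g) ([:-2, 1:] * (dickson1 g + [:c:]))"
    by (rule quotient_given_by_act_s_omega[OF assms(2)])
qed

theorem theorem1:
  fixes p n g :: nat and c :: "'a::field"
  assumes "finite (UNIV :: 'a set)"
    and "prime p" and "p > 2" and "card (UNIV :: 'a set) = p ^ n"
    and "g \<ge> 2" and "gcd g p = 1"
    and "coprime (Cpoly g c) (pderiv (Cpoly g c))"
  shows "quotient_given_by (Cpoly g c) (act_s g)
           (if odd g then dickson1 g + [:c:] else [:2, 1:] * (dickson1 g + [:c:]))
       \<and> quotient_given_by (Cpoly g c) (act_s_omega g)
           (if odd g then [:-4, 0, 1:] * (dickson1 g + [:c:]) else [:-2, 1:] * (dickson1 g + [:c:]))"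
proof (cases "odd g")
  case True
  then obtain m where "g + 1 = 2 * m" by (metis odd_even_add odd_one evenE)
  then show ?thesis unfolding if_P[OF True] using quotients_of_Cpoly_odd by blast
next
  case False
  then obtain m where "g = 2 * m" by (metis evenE)
  moreover have "g \<ge> 1" using assms(5) by simp
  ultimately show ?thesis unfolding if_not_P[OF False] using quotients_of_Cpoly_even by blast
qed

end
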